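(* There exist a positive function $x\in M_{1,\infty}$ and a dilation invariant generalised limit $\omega$ on $L_\infty(0,\infty)$ (so that $\tau_\omega$ is a Dixmier trace on $M_{1,\infty}$) such that $$\tau_\omega(x)\neq\omega\Big(t\mapsto\frac{-1}{\log(t)}\int_{1/t}^\infty\lambda\,dn_x(\lambda)\Big).$$
   Context: For a bounded measurable $x$ on $(0,\infty)$, $n_x(\lambda)=m(\{s:|x(s)|>\lambda\})$ ($m$ Lebesgue measure) and $x^*$ is the right-continuous nonincreasing rearrangement of $|x|$; the Stieltjes integral $-\int_z^\infty\lambda\,dn_x(\lambda)$ equals $\int_0^{n_x(z)}x^*(s)ds$. $M_{1,\infty}$ is the space of bounded measurable $x$ on $(0,\infty)$ with $\sup_{t\ge e}\frac1{\log t}\int_0^tx^*(s)ds<\infty$. A generalised limit on $L_\infty(0,\infty)$ is a positive linear functional $\omega$ with $\omega(1)=1$ and $\omega(y)=0$ whenever $y(t)\to0$ as $t\to\infty$; it is dilation invariant if $\omega(\sigma_ny)=\omega(y)$ for all $n\in\mathbb{N}$, where $(\sigma_ny)(t)=y(t/n)$. For such $\omega$, $\tau_\omega(x)=\omega(t\mapsto\frac1{\log t}\int_0^tx^*(s)ds)$ for $0\le x\in M_{1,\infty}$ is additive (a Dixmier trace). Functions of $t$ to which $\omega$ is applied are considered for large $t$; their values on a bounded initial interval do not affect $\omega$. *)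

theory Defs
  imports "HOL-Analysis.Analysis"
begin

definition distrib_fun :: "(real \<Rightarrow> real) \<Rightarrow> real \<Rightarrow> ennreal" where
  "distrib_fun x l = emeasure lborel {s \<in> {0<..}. \<bar>x s\<bar> > l}"

text \<open>Right-continuous nonincreasing rearrangement x* of |x|.\<close>
definition rearr :: "(real \<Rightarrow> real) \<Rightarrow> real \<Rightarrow> real" where
  "rearr x t = Inf {l::real. 0 \<le> l \<and> distrib_fun x l \<le> ennreal t}"

definition bdd_meas :: "(real \<Rightarrow> real) set" where
  "bdd_meas = {x. x \<in> borel_measurable (restrict_space lborel {0<..})
                 \<and> (\<exists>C. \<forall>s>0. \<bar>x s\<bar> \<le> C)}"

definition M1inf :: "(real \<Rightarrow> real) set" where
  "M1inf = {x. x \<in> bdd_meas \<and>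
     (\<exists>C. \<forall>t\<ge>exp 1. (LBINT s=0..t. rearr x s) / ln t \<le> C)}"

text \<open>L_infinity(0,infinity), via representatives (values at t \<le> 0 are irrelevant).\<close>
definition Linf :: "(real \<Rightarrow> real) set" where
  "Linf = {f. f \<in> borel_measurable (restrict_space lborel {0<..})
              \<and> (\<exists>C. AE t in lborel. t > 0 \<longrightarrow> \<bar>f t\<bar> \<le> C)}"

definition generalised_limit :: "((real \<Rightarrow> real) \<Rightarrow> real) \<Rightarrow> bool" where
  "generalised_limit \<omega> \<longleftrightarrow>
     \<omega> (\<lambda>_. 1) = 1
   \<and> (\<forall>f\<in>Linf. \<forall>g\<in>Linf. \<omega> (\<lambda>t. f t + g t) = \<omega> f + \<omega> g)
   \<and> (\<forall>f\<in>Linf. \<forall>c::real. \<omega> (\<lambda>t. c * f t) = c * \<omega> f)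
   \<and> (\<forall>f\<in>Linf. (AE t in lborel. t > 0 \<longrightarrow> 0 \<le> f t) \<longrightarrow> 0 \<le> \<omega> f)
   \<and> (\<forall>f\<in>Linf. (f \<longlongrightarrow> 0) at_top \<longrightarrow> \<omega> f = 0)"

definition dilation_invariant :: "((real \<Rightarrow> real) \<Rightarrow> real) \<Rightarrow> bool" where
  "dilation_invariant \<omega> \<longleftrightarrow>
     (\<forall>f\<in>Linf. \<forall>n::nat. n \<ge> 1 \<longrightarrow> \<omega> (\<lambda>t. f (t / real n)) = \<omega> f)"

definition dix_fun :: "(real \<Rightarrow> real) \<Rightarrow> real \<Rightarrow> real" where
  "dix_fun x t = (if t \<ge> exp 1 then (LBINT s=0..t. rearr x s) / ln t else 0)"

definition dixmier_trace :: "((real \<Rightarrow> real) \<Rightarrow> real) \<Rightarrow> (real \<Rightarrow> real) \<Rightarrow> real" where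
  "dixmier_trace \<omega> x = \<omega> (dix_fun x)"

text \<open>t \<mapsto> (-1/log t) int_{1/t}^infinity lambda dn_x(lambda)
  = (1/log t) int_0^{n_x(1/t)} x*(s) ds, cut off for t < e.\<close>
definition stieltjes_fun :: "(real \<Rightarrow> real) \<Rightarrow> real \<Rightarrow> real" where
  "stieltjes_fun x t = (if t \<ge> exp 1
      then (LBINT s=0..enn2real (distrib_fun x (1/t)). rearr x s) / ln t else 0)"

end

theory Submission
  imports Defs "HOL-Real_Asymp.Real_Asymp"
begin

text \<open>The counterexample is the step function \<open>x\<close> equal to \<open>exp (- c k)\<close> on the block
  \<open>(s (k - 1), s k]\<close>, where \<open>c k = 4 * 2 ^ k\<close> and \<open>s k = c k * exp (c k)\<close>. It is its own
  rearrangement and block \<open>k\<close> contributes \<open>c k\<close> to the integral of \<open>x\<^sup>*\<close>, so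
  \<open>\<integral>\<^sub>0\<^sup>t x\<^sup>* \<le> 4 ln t\<close>. For \<open>t\<close> in the window \<open>(exp (c k), s k / 2]\<close> one has
  \<open>n\<^sub>x (1 / t) = s k\<close>, so the Stieltjes functional integrates \<open>x\<^sup>*\<close> over the rest of the block
  as well and exceeds the Dixmier functional by at least \<open>(c k / 2) / ln t \<ge> 1 / 4\<close>. The windows
  have logarithmic length \<open>ln (c k / 2) \<longrightarrow> \<infinity>\<close>, so the limit along a free ultrafilter of the
  logarithmic means over them is a dilation invariant generalised limit, and it separates the two
  functionals by \<open>1 / 4\<close>.\<close>

section \<open>Ultrafilters\<close>

lemma ex_ultrafilter_le:
  fixes F :: "'a filter"
  assumes "F \<noteq> bot"
  shows "\<exists>U. U \<noteq> bot \<and> U \<le> F \<and> (\<forall>P. eventually P U \<or> eventually (\<lambda>x. \<not> P x) U)"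
proof -
  define A where "A = {G. G \<noteq> bot \<and> G \<le> F}"
  have "\<exists>U\<in>A. \<forall>G\<in>A. G \<le> U \<longrightarrow> G = U"
  proof (rule predicate_Zorn)
    show "partial_order_on A (relation_of (\<ge>) A)"
      by (rule partial_order_on_relation_ofI) auto
  next
    fix C assume C: "C \<in> Chains (relation_of (\<ge>) A)"
    then have CA: "C \<subseteq> A" and total: "\<And>G H. G \<in> C \<Longrightarrow> H \<in> C \<Longrightarrow> G \<le> H \<or> H \<le> G"
      by (auto simp: Chains_def relation_of_def)
    show "\<exists>U\<in>A. \<forall>G\<in>C. U \<le> G"
    proof (cases "C = {}")
      case True
      then show ?thesis using assms by (auto simp: A_def)
    next
      case False
      \<comment> \<open>a chain is a filter base, so its infimum is proper\<close>
      have ev: "eventually P (Inf C) \<longleftrightarrow> (\<exists>G\<in>C. eventually P G)" for P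
      proof (rule eventually_Inf_base[OF False])
        fix G H assume "G \<in> C" "H \<in> C"
        then show "\<exists>K\<in>C. K \<le> inf G H" using total[of G H] by (auto simp: inf_absorb1 inf_absorb2)
      qed
      have "Inf C \<noteq> bot" using CA by (auto simp: trivial_limit_def ev A_def)
      moreover have "Inf C \<le> F" using False CA by (auto simp: A_def intro: Inf_lower2)
      ultimately show ?thesis by (auto simp: A_def intro: Inf_lower)
    qed
  qed
  then obtain U where U: "U \<noteq> bot" "U \<le> F" and max: "\<And>G. G \<noteq> bot \<Longrightarrow> G \<le> U \<Longrightarrow> G = U"
  proof -
    from \<open>\<exists>U\<in>A. _\<close> obtain U where U: "U \<in> A" and max: "\<And>G. G \<in> A \<Longrightarrow> G \<le> U \<Longrightarrow> G = U"
      by blast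
    show ?thesis
    proof (rule that)
      show "U \<noteq> bot" "U \<le> F" using U by (simp_all add: A_def)
      show "G = U" if "G \<noteq> bot" "G \<le> U" for G
        using max[of G] that order_trans[OF that(2) \<open>U \<le> F\<close>] by (simp add: A_def)
    qed
  qed
  have "eventually P U" if "\<not> eventually (\<lambda>x. \<not> P x) U" for P
  proof -
    have "inf U (principal {x. P x}) \<noteq> bot"
      using that by (simp add: trivial_limit_def eventually_inf_principal)
    then have "inf U (principal {x. P x}) = U" by (rule max) simp
    moreover have "eventually P (inf U (principal {x. P x}))" by (simp add: eventually_inf_principal)
    ultimately show ?thesis by simp
  qed
  then show ?thesis using U by blast
qed

lemma ultrafilter_tendsto_bounded:
  fixes f :: "'a \<Rightarrow> real"
  assumes U: "U \<noteq> bot" "\<forall>P. eventually P U \<or> eventually (\<lambda>x. \<not> P x) U"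
    and bounded: "\<And>x. \<bar>f x\<bar> \<le> B"
  shows "\<exists>L. (f \<longlongrightarrow> L) U"
proof -
  have "f x \<in> {-B..B}" for x using bounded[of x] by auto
  then have "eventually (\<lambda>y. y \<in> {-B..B}) (filtermap f U)" by (simp add: eventually_filtermap)
  moreover have "filtermap f U \<noteq> bot" using U(1) by (simp add: filtermap_bot_iff)
  ultimately obtain L where L: "inf (nhds L) (filtermap f U) \<noteq> bot"
    using compact_filter[THEN iffD1, OF compact_Icc] by blast
  have "eventually (\<lambda>x. f x \<in> S) U" if "open S" "L \<in> S" for S
  proof (rule ccontr)
    assume "\<not> eventually (\<lambda>x. f x \<in> S) U"
    then have "eventually (\<lambda>y. y \<notin> S) (filtermap f U)"
      using U(2) by (auto simp: eventually_filtermap)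
    moreover have "eventually (\<lambda>y. y \<in> S) (nhds L)" using that by (rule eventually_nhds_in_open)
    ultimately have "eventually (\<lambda>_. False) (inf (nhds L) (filtermap f U))"
      unfolding eventually_inf by (intro exI[of _ "\<lambda>y. y \<in> S"] exI[of _ "\<lambda>y. y \<notin> S"] conjI) simp_all
    then show False using L by (simp add: trivial_limit_def)
  qed
  then have "(f \<longlongrightarrow> L) U" by (rule topological_tendstoI)
  then show ?thesis ..
qed

section \<open>Logarithmic means of bounded functions\<close>

lemma Linf_boundE:
  assumes "f \<in> Linf"
  obtains C where "0 \<le> C" "AE t in lborel. 0 < t \<longrightarrow> \<bar>f t\<bar> \<le> C"
proof -
  obtain C where "AE t in lborel. 0 < t \<longrightarrow> \<bar>f t\<bar> \<le> C" using assms by (auto simp: Linf_def)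
  then have "AE t in lborel. 0 < t \<longrightarrow> \<bar>f t\<bar> \<le> max C 0" by (auto elim!: eventually_mono)
  then show ?thesis using that[of "max C 0"] by simp
qed

lemma Linf_I:
  assumes "f \<in> borel_measurable borel" "\<And>t. \<bar>f t\<bar> \<le> C"
  shows "f \<in> Linf"
  unfolding Linf_def using assms by (auto intro!: measurable_restrict_space1 AE_I2)

lemma Linf_const: "(\<lambda>_. c) \<in> Linf"
  by (rule Linf_I[where C="\<bar>c\<bar>"]) auto

lemma set_integrable_Linf_divide:
  assumes "f \<in> Linf" "0 < p"
  shows "set_integrable lborel {p<..q} (\<lambda>s. f s / s)"
proof -
  obtain C where C: "0 \<le> C" "AE t in lborel. 0 < t \<longrightarrow> \<bar>f t\<bar> \<le> C" using Linf_boundE[OF assms(1)] .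
  have "f \<in> borel_measurable (restrict_space lborel {0<..})" using assms by (auto simp: Linf_def)
  then have [measurable]: "(\<lambda>s. indicator {0<..} s *\<^sub>R f s) \<in> borel_measurable lborel"
    by (subst borel_measurable_restrict_space_iff[symmetric]) auto
  have "(\<lambda>s. indicator {p<..q} s *\<^sub>R (f s / s))
      = (\<lambda>s. indicator {p<..q} s * ((indicator {0<..} s *\<^sub>R f s) / s))"
    using assms(2) by (auto simp: fun_eq_iff indicator_def)
  also have "\<dots> \<in> borel_measurable lborel" by measurable
  finally have meas: "(\<lambda>s. indicator {p<..q} s *\<^sub>R (f s / s)) \<in> borel_measurable lborel" .
  have "emeasure lborel {p<..q} < \<infinity>" by (cases "p \<le> q") (simp_all add: emeasure_lborel_Ioc)
  then have "integrable lborel (\<lambda>s. indicator {p<..q} s * (C / p))"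
    by (intro integrable_mult_left) (simp add: integrable_indicator_iff)
  moreover have "AE s in lborel. norm (indicator {p<..q} s *\<^sub>R (f s / s)) \<le> norm (indicator {p<..q} s * (C / p))"
    using C(2)
  proof (rule eventually_mono)
    fix s assume "0 < s \<longrightarrow> \<bar>f s\<bar> \<le> C"
    moreover have "s \<in> {p<..q} \<Longrightarrow> \<bar>f s\<bar> \<le> C \<Longrightarrow> \<bar>f s\<bar> / s \<le> C / p"
      using C(1) assms(2) by (auto intro: frac_le)
    ultimately show "norm (indicator {p<..q} s *\<^sub>R (f s / s)) \<le> norm (indicator {p<..q} s * (C / p))"
      using assms(2) C(1) by (auto simp: indicator_def abs_divide)
  qed
  ultimately show ?thesis
    unfolding set_integrable_def by (rule Bochner_Integration.integrable_bound[OF _ meas])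
qed

lemma integral_inverse_Ioc:
  fixes p q :: real
  assumes "0 < p" "p \<le> q"
  shows "(LINT s:{p<..q}|lborel. 1 / s) = ln q - ln p"
proof -
  have "(LBINT s=ereal p..ereal q. 1 / s) = ln q - ln p"
  proof (rule interval_integral_FTC_finite)
    show "continuous_on {min p q..max p q} (\<lambda>s. 1 / s)"
      using assms by (intro continuous_intros) auto
    fix x assume "min p q \<le> x" "x \<le> max p q"
    then have "0 < x" using assms by auto
    then show "(ln has_vector_derivative 1 / x) (at x within {min p q..max p q})"
      by (auto intro!: derivative_eq_intros simp: has_real_derivative_iff_has_vector_derivative[symmetric])
  qed
  then show ?thesis using assms by (simp add: interval_integral_Ioc)
qed

lemma abs_integral_divide_le:
  assumes "f \<in> Linf" "0 < p" "p \<le> q"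
    and bound: "AE s in lborel. s \<in> {p<..q} \<longrightarrow> \<bar>f s\<bar> \<le> C"
  shows "\<bar>LINT s:{p<..q}|lborel. f s / s\<bar> \<le> C * (ln q - ln p)"
proof -
  have "\<bar>LINT s:{p<..q}|lborel. f s / s\<bar> \<le> (LINT s:{p<..q}|lborel. \<bar>f s / s\<bar>)"
    using set_integral_norm_bound[OF set_integrable_Linf_divide[OF assms(1,2)]] by simp
  also have "\<dots> \<le> (LINT s:{p<..q}|lborel. C / s)"
  proof (rule set_integral_mono_AE)
    show "set_integrable lborel {p<..q} (\<lambda>s. \<bar>f s / s\<bar>)"
      by (rule set_integrable_abs[OF set_integrable_Linf_divide[OF assms(1,2)]])
    show "set_integrable lborel {p<..q} (\<lambda>s. C / s)"
      using set_integrable_Linf_divide[OF Linf_const assms(2)] .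
    show "AE s\<in>{p<..q} in lborel. \<bar>f s / s\<bar> \<le> C / s"
      using bound by (rule eventually_mono) (use assms(2) in \<open>auto simp: abs_divide divide_right_mono\<close>)
  qed
  also have "\<dots> = C * (ln q - ln p)"
    using set_integral_mult_right[of lborel "{p<..q}" C "\<lambda>s. 1 / s"] integral_inverse_Ioc[OF assms(2,3)]
    by simp
  finally show ?thesis .
qed

lemma integral_divide_Un:
  assumes "f \<in> Linf" "0 < p" "p \<le> q" "q \<le> r"
  shows "(LINT s:{p<..q}|lborel. f s / s) + (LINT s:{q<..r}|lborel. f s / s)
       = (LINT s:{p<..r}|lborel. f s / s)"
proof -
  have "{p<..r} = {p<..q} \<union> {q<..r}" using assms by auto
  then show ?thesis
    using assms set_integrable_Linf_divide[OF assms(1)] by (simp add: set_integral_Un)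
qed

lemma integral_divide_dilate:
  fixes c p q :: real
  assumes "0 < c"
  shows "(LINT s:{p<..q}|lborel. f (s / c) / s) = (LINT s:{p/c<..q/c}|lborel. f s / s)"
proof -
  have "(LINT s:{p<..q}|lborel. f (s / c) / s)
      = \<bar>c\<bar> *\<^sub>R (LINT s|lborel. indicator {p<..q} (0 + c * s) *\<^sub>R (f ((0 + c * s) / c) / (0 + c * s)))"
    unfolding set_lebesgue_integral_def by (rule lborel_integral_real_affine) (use assms in simp)
  also have "\<dots> = c * (LINT s|lborel. indicator {p<..q} (c * s) *\<^sub>R (f s / (c * s)))"
    using assms by simp
  also have "\<dots> = (LINT s|lborel. c * (indicator {p<..q} (c * s) *\<^sub>R (f s / (c * s))))"
    by (rule integral_mult_right_zero[symmetric])
  also have "\<dots> = (LINT s:{p/c<..q/c}|lborel. f s / s)"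
    unfolding set_lebesgue_integral_def
  proof (rule Bochner_Integration.integral_cong[OF refl])
    fix s
    have "c * s \<in> {p<..q} \<longleftrightarrow> s \<in> {p/c<..q/c}" using assms by (auto simp: field_simps)
    then show "c * (indicator {p<..q} (c * s) *\<^sub>R (f s / (c * s))) = indicator {p/c<..q/c} s *\<^sub>R (f s / s)"
      using assms by (auto simp: indicator_def)
  qed
  finally show ?thesis .
qed

definition log_avg :: "real \<Rightarrow> real \<Rightarrow> (real \<Rightarrow> real) \<Rightarrow> real" where
  "log_avg p q f = (LINT s:{p<..q}|lborel. f s / s) / (ln q - ln p)"

lemma log_avg_const_one: "0 < p \<Longrightarrow> p < q \<Longrightarrow> log_avg p q (\<lambda>_. 1) = 1"
  by (simp add: log_avg_def integral_inverse_Ioc)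

lemma log_avg_add:
  assumes "f \<in> Linf" "g \<in> Linf" "0 < p"
  shows "log_avg p q (\<lambda>t. f t + g t) = log_avg p q f + log_avg p q g"
  using set_integral_add[OF set_integrable_Linf_divide[OF assms(1,3)] set_integrable_Linf_divide[OF assms(2,3)]]
  by (simp add: log_avg_def add_divide_distrib)

lemma log_avg_scale: "log_avg p q (\<lambda>t. c * f t) = c * log_avg p q f"
  using set_integral_mult_right[of lborel "{p<..q}" c "\<lambda>s. f s / s"] by (simp add: log_avg_def)

lemma abs_log_avg_le:
  assumes "f \<in> Linf" "0 < p" "p < q"
    and "AE s in lborel. s \<in> {p<..q} \<longrightarrow> \<bar>f s\<bar> \<le> C"
  shows "\<bar>log_avg p q f\<bar> \<le> C"
  using abs_integral_divide_le[OF assms(1,2) less_imp_le[OF assms(3)] assms(4)] assms(2,3)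
  by (simp add: log_avg_def abs_divide pos_divide_le_eq)

lemma log_avg_add_const_le:
  assumes "f \<in> Linf" "g \<in> Linf" "0 < p" "p < q"
    and le: "\<And>t. t \<in> {p<..q} \<Longrightarrow> f t + d \<le> g t"
  shows "log_avg p q f + d \<le> log_avg p q g"
proof -
  have int_f: "set_integrable lborel {p<..q} (\<lambda>s. f s / s)"
    and int_d: "set_integrable lborel {p<..q} (\<lambda>s. d / s)"
    using set_integrable_Linf_divide[OF _ assms(3)] assms(1) Linf_const by auto
  have "(LINT s:{p<..q}|lborel. f s / s) + d * (ln q - ln p) = (LINT s:{p<..q}|lborel. f s / s + d / s)"
    using set_integral_add[OF int_f int_d] set_integral_mult_right[of lborel "{p<..q}" d "\<lambda>s. 1 / s"]
      integral_inverse_Ioc[OF assms(3) less_imp_le[OF assms(4)]]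
    by simp
  also have "\<dots> \<le> (LINT s:{p<..q}|lborel. g s / s)"
  proof (rule set_integral_mono)
    show "set_integrable lborel {p<..q} (\<lambda>s. f s / s + d / s)" using int_f int_d by (rule set_integral_add)
    show "set_integrable lborel {p<..q} (\<lambda>s. g s / s)" using set_integrable_Linf_divide[OF assms(2,3)] .
    fix s assume "s \<in> {p<..q}"
    with le[of s] assms(3) show "f s / s + d / s \<le> g s / s"
      by (simp add: add_divide_distrib[symmetric] divide_right_mono)
  qed
  finally have integrals: "(LINT s:{p<..q}|lborel. f s / s) + d * (ln q - ln p) \<le> (LINT s:{p<..q}|lborel. g s / s)" .
  have L: "0 < ln q - ln p" using assms(3,4) by simp
  then have "log_avg p q f + d = ((LINT s:{p<..q}|lborel. f s / s) + d * (ln q - ln p)) / (ln q - ln p)"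
    by (simp add: log_avg_def field_simps)
  also have "\<dots> \<le> log_avg p q g"
    unfolding log_avg_def using integrals L by (simp add: divide_right_mono)
  finally show ?thesis .
qed

lemma log_avg_nonneg:
  assumes "0 < p" "AE t in lborel. 0 < t \<longrightarrow> 0 \<le> f t"
  shows "0 \<le> log_avg p q f"
proof (cases "p < q")
  case True
  have "0 \<le> (LINT s:{p<..q}|lborel. f s / s)"
    unfolding set_lebesgue_integral_def using assms
    by (intro integral_nonneg_AE) (auto elim!: eventually_mono simp: indicator_def)
  with True assms(1) show ?thesis by (simp add: log_avg_def)
qed (simp add: log_avg_def set_lebesgue_integral_def)

text \<open>Dilating \<open>f\<close> by \<open>c\<close> only shifts the window \<open>{p<..q}\<close> by \<open>ln c\<close> on the logarithmic scale,
  so the two averages differ by the contributions of two windows of logarithmic length \<open>ln c\<close>.\<close>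
lemma log_avg_dilate:
  assumes f: "f \<in> Linf" "AE t in lborel. 0 < t \<longrightarrow> \<bar>f t\<bar> \<le> C"
    and pq: "0 < p" "p < q" and c: "1 \<le> c"
  shows "\<bar>log_avg p q (\<lambda>t. f (t / c)) - log_avg p q f\<bar> \<le> 2 * C * ln c / (ln q - ln p)"
proof -
  define I where "I x y = (LINT s:{x<..y}|lborel. f s / s)" for x y
  have pc: "0 < p / c" "p / c \<le> q / c" "q / c \<le> q" "p / c \<le> p"
    using pq c by (auto simp: field_simps)
  have "(LINT s:{p<..q}|lborel. f (s / c) / s) = I (p/c) (q/c)"
    unfolding I_def using c by (simp add: integral_divide_dilate)
  moreover have "I (p/c) (q/c) + I (q/c) q = I (p/c) p + I p q"
    unfolding I_def using pq pc f(1) by (simp add: integral_divide_Un)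
  ultimately have diff: "log_avg p q (\<lambda>t. f (t / c)) - log_avg p q f = (I (p/c) p - I (q/c) q) / (ln q - ln p)"
    by (simp add: log_avg_def I_def diff_divide_distrib[symmetric])
  have "ln p - ln (p / c) = ln c" "ln q - ln (q / c) = ln c"
    using pq c by (simp_all add: ln_div)
  then have "\<bar>I (p/c) p\<bar> \<le> C * ln c" "\<bar>I (q/c) q\<bar> \<le> C * ln c"
    unfolding I_def using pc f
    by (auto intro!: order.trans[OF abs_integral_divide_le] elim!: eventually_mono)
  then have "\<bar>I (p/c) p - I (q/c) q\<bar> \<le> 2 * C * ln c" by linarith
  then show ?thesis using pq diff by (simp add: abs_divide divide_right_mono)
qed

section \<open>A dilation invariant generalised limit\<close>

locale log_window_limit =
  fixes a b :: "nat \<Rightarrow> real" and U :: "nat filter"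
  assumes a_pos: "\<And>k. 0 < a k" and a_less_b: "\<And>k. a k < b k"
    and a_tendsto: "filterlim a at_top sequentially"
    and log_ratio_tendsto: "filterlim (\<lambda>k. ln (b k) - ln (a k)) at_top sequentially"
    and U_proper: "U \<noteq> bot" and U_le: "U \<le> sequentially"
    and U_ultra: "\<forall>P. eventually P U \<or> eventually (\<lambda>k. \<not> P k) U"
begin

definition lim_log_avg :: "(real \<Rightarrow> real) \<Rightarrow> real" where
  "lim_log_avg f = Lim U (\<lambda>k. log_avg (a k) (b k) f)"

lemma lim_log_avg_eqI: "((\<lambda>k. log_avg (a k) (b k) f) \<longlongrightarrow> l) U \<Longrightarrow> lim_log_avg f = l"
  unfolding lim_log_avg_def using U_proper by (intro tendsto_Lim) simp_all

lemma tendsto_lim_log_avg: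
  assumes "f \<in> Linf"
  shows "((\<lambda>k. log_avg (a k) (b k) f) \<longlongrightarrow> lim_log_avg f) U"
proof -
  obtain C where "AE t in lborel. 0 < t \<longrightarrow> \<bar>f t\<bar> \<le> C" using Linf_boundE[OF assms] by blast
  then have "\<bar>log_avg (a k) (b k) f\<bar> \<le> C" for k
    using a_pos[of k] by (intro abs_log_avg_le[OF assms a_pos a_less_b]) (auto elim!: eventually_mono)
  then obtain l where "((\<lambda>k. log_avg (a k) (b k) f) \<longlongrightarrow> l) U"
    using ultrafilter_tendsto_bounded[OF U_proper U_ultra, of "\<lambda>k. log_avg (a k) (b k) f" C] by blast
  with lim_log_avg_eqI show ?thesis by simp
qed

lemma lim_log_avg_vanishing:
  assumes "f \<in> Linf" "(f \<longlongrightarrow> 0) at_top"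
  shows "lim_log_avg f = 0"
proof (rule lim_log_avg_eqI, rule tendsto_mono[OF U_le], rule tendstoI)
  fix e :: real assume "0 < e"
  then obtain S where S: "\<And>t. S \<le> t \<Longrightarrow> \<bar>f t\<bar> \<le> e / 2"
    using assms(2)[THEN tendstoD, of "e / 2"] by (auto simp: eventually_at_top_linorder intro: less_imp_le)
  have "eventually (\<lambda>k. S \<le> a k) sequentially" using a_tendsto by (simp add: filterlim_at_top)
  then show "eventually (\<lambda>k. dist (log_avg (a k) (b k) f) 0 < e) sequentially"
  proof (rule eventually_mono)
    fix k assume "S \<le> a k"
    then have "\<bar>log_avg (a k) (b k) f\<bar> \<le> e / 2"
      using S by (intro abs_log_avg_le[OF assms(1) a_pos a_less_b] AE_I2) auto
    with \<open>0 < e\<close> show "dist (log_avg (a k) (b k) f) 0 < e" by simp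
  qed
qed

lemma generalised_limit_lim_log_avg: "generalised_limit lim_log_avg"
  unfolding generalised_limit_def
proof (intro conjI ballI allI impI)
  show "lim_log_avg (\<lambda>_. 1) = 1"
    using a_pos a_less_b by (intro lim_log_avg_eqI) (simp add: log_avg_const_one)
next
  fix f g assume "f \<in> Linf" "g \<in> Linf"
  then have "((\<lambda>k. log_avg (a k) (b k) f + log_avg (a k) (b k) g) \<longlongrightarrow> lim_log_avg f + lim_log_avg g) U"
    by (intro tendsto_add tendsto_lim_log_avg)
  with \<open>f \<in> Linf\<close> \<open>g \<in> Linf\<close> show "lim_log_avg (\<lambda>t. f t + g t) = lim_log_avg f + lim_log_avg g"
    by (intro lim_log_avg_eqI) (simp add: log_avg_add a_pos)
next
  fix f c assume "f \<in> Linf"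
  then have "((\<lambda>k. c * log_avg (a k) (b k) f) \<longlongrightarrow> c * lim_log_avg f) U"
    by (intro tendsto_mult_left tendsto_lim_log_avg)
  then show "lim_log_avg (\<lambda>t. c * f t) = c * lim_log_avg f"
    by (intro lim_log_avg_eqI) (simp add: log_avg_scale)
next
  fix f assume "f \<in> Linf" "AE t in lborel. 0 < t \<longrightarrow> 0 \<le> f t"
  then show "0 \<le> lim_log_avg f"
    using U_proper a_pos log_avg_nonneg
    by (intro tendsto_lowerbound[OF tendsto_lim_log_avg] always_eventually allI) simp_all
next
  fix f assume "f \<in> Linf" "(f \<longlongrightarrow> 0) at_top"
  then show "lim_log_avg f = 0" by (rule lim_log_avg_vanishing)
qed

lemma dilation_invariant_lim_log_avg: "dilation_invariant lim_log_avg"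
  unfolding dilation_invariant_def
proof (intro ballI allI impI)
  fix f and n :: nat assume f: "f \<in> Linf" and n: "1 \<le> n"
  obtain C where C: "AE t in lborel. 0 < t \<longrightarrow> \<bar>f t\<bar> \<le> C" using Linf_boundE[OF f] by blast
  let ?d = "\<lambda>k. log_avg (a k) (b k) (\<lambda>t. f (t / real n)) - log_avg (a k) (b k) f"
  have "\<forall>k. norm (?d k) \<le> 2 * C * ln (real n) / (ln (b k) - ln (a k))"
    using n by (auto intro!: log_avg_dilate[OF f C a_pos a_less_b])
  moreover have "((\<lambda>k. 2 * C * ln (real n) / (ln (b k) - ln (a k))) \<longlongrightarrow> 0) sequentially"
    by (rule tendsto_divide_0[OF tendsto_const filterlim_at_top_imp_at_infinity[OF log_ratio_tendsto]])
  ultimately have "(?d \<longlongrightarrow> 0) sequentially"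
    by (rule Lim_null_comparison[OF always_eventually])
  then have "(?d \<longlongrightarrow> 0) U" by (rule tendsto_mono[OF U_le])
  then have "((\<lambda>k. log_avg (a k) (b k) f + ?d k) \<longlongrightarrow> lim_log_avg f + 0) U"
    by (intro tendsto_add tendsto_lim_log_avg f)
  then show "lim_log_avg (\<lambda>t. f (t / real n)) = lim_log_avg f"
    by (intro lim_log_avg_eqI) simp
qed

lemma lim_log_avg_offset_le:
  assumes "f \<in> Linf" "g \<in> Linf" "\<And>k. log_avg (a k) (b k) f + d \<le> log_avg (a k) (b k) g"
  shows "lim_log_avg f + d \<le> lim_log_avg g"
  using U_proper assms(3)
  by (intro tendsto_le[OF _ tendsto_lim_log_avg[OF assms(2)] tendsto_add[OF tendsto_lim_log_avg[OF assms(1)] tendsto_const]])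
     simp_all

end

lemma ex_dilation_invariant_generalised_limit:
  fixes a b :: "nat \<Rightarrow> real"
  assumes "\<And>k. 0 < a k" "\<And>k. a k < b k" "filterlim a at_top sequentially"
    and "filterlim (\<lambda>k. ln (b k) - ln (a k)) at_top sequentially"
  obtains \<omega> where "generalised_limit \<omega>" "dilation_invariant \<omega>"
    "\<And>f g d. f \<in> Linf \<Longrightarrow> g \<in> Linf \<Longrightarrow> (\<And>k. log_avg (a k) (b k) f + d \<le> log_avg (a k) (b k) g)
       \<Longrightarrow> \<omega> f + d \<le> \<omega> g"
proof -
  obtain U :: "nat filter" where "U \<noteq> bot" "U \<le> sequentially" "\<forall>P. eventually P U \<or> eventually (\<lambda>k. \<not> P k) U"
    using ex_ultrafilter_le[of sequentially] by auto
  then interpret log_window_limit a b U by unfold_locales (use assms in auto)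
  show ?thesis
    using that generalised_limit_lim_log_avg dilation_invariant_lim_log_avg lim_log_avg_offset_le by blast
qed

section \<open>The counterexample\<close>

lemma borel_measurable_antimono:
  fixes f :: "real \<Rightarrow> real"
  assumes "antimono f"
  shows "f \<in> borel_measurable borel"
proof -
  have "mono (\<lambda>s. - f s)" using assms by (intro monoI) (simp add: antimonoD)
  then have "(\<lambda>s. - (- f s)) \<in> borel_measurable borel" by (intro borel_measurable_uminus borel_measurable_mono)
  then show ?thesis by simp
qed

lemma ln_ge_1: "exp 1 \<le> (t::real) \<Longrightarrow> 1 \<le> ln t"
  using ln_ge_iff[of t 1] exp_gt_zero[of 1] by linarith

lemma distrib_fun_antimono:
  assumes "x \<in> borel_measurable borel" "l \<le> l'"
  shows "distrib_fun x l' \<le> distrib_fun x l"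
  unfolding distrib_fun_def using assms by (intro emeasure_mono) auto

definition c_exp :: "nat \<Rightarrow> real" where "c_exp k = 4 * 2 ^ k"
definition knot :: "nat \<Rightarrow> real" where "knot k = c_exp k * exp (c_exp k)"

text \<open>\<open>x0\<close> equals \<open>exp (- c_exp k)\<close> on \<open>{knot (k - 1)<..knot k}\<close> (on \<open>{..knot 0}\<close> for \<open>k = 0\<close>);
  its right-continuous version \<open>x0_star\<close> is the rearrangement of \<open>x0\<close>.\<close>
definition block :: "real \<Rightarrow> nat" where "block s = (LEAST k. s \<le> knot k)"
definition rblock :: "real \<Rightarrow> nat" where "rblock s = (LEAST k. s < knot k)"
definition x0 :: "real \<Rightarrow> real" where "x0 s = exp (- c_exp (block s))"
definition x0_star :: "real \<Rightarrow> real" where "x0_star s = exp (- c_exp (rblock s))"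

lemma c_exp_ge_4: "4 \<le> c_exp k"
  by (simp add: c_exp_def)

lemma c_exp_Suc: "c_exp (Suc k) = 2 * c_exp k"
  by (simp add: c_exp_def)

lemma c_exp_ge: "real k \<le> c_exp k"
  using of_nat_less_two_power[of k, where 'a = real] by (simp add: c_exp_def, linarith)

lemma c_exp_le_iff [simp]: "c_exp j \<le> c_exp k \<longleftrightarrow> j \<le> k"
  by (simp add: c_exp_def)

lemma c_exp_less_iff [simp]: "c_exp j < c_exp k \<longleftrightarrow> j < k"
  by (simp add: c_exp_def)

lemma c_exp_le_exp: "c_exp k \<le> exp (c_exp k)"
  using exp_ge_add_one_self[of "c_exp k"] by linarith

lemma knot_pos: "0 < knot k"
  using c_exp_ge_4[of k] by (simp add: knot_def)

lemma exp_c_exp_le_knot: "exp (c_exp k) \<le> knot k"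
  using c_exp_ge_4[of k] by (simp add: knot_def)

lemma knot_le_exp_c_exp_Suc: "knot k \<le> exp (c_exp (Suc k))"
proof -
  have "knot k \<le> exp (c_exp k) * exp (c_exp k)"
    unfolding knot_def using c_exp_le_exp[of k] by (intro mult_right_mono) auto
  also have "\<dots> = exp (c_exp (Suc k))" by (simp only: c_exp_Suc mult_2 exp_add)
  finally show ?thesis .
qed

lemma knot_mono: "j \<le> k \<Longrightarrow> knot j \<le> knot k"
  unfolding knot_def using c_exp_ge_4[of j] c_exp_ge_4[of k] by (intro mult_mono) auto

lemma ex_less_knot: "\<exists>k. t < knot k"
proof -
  obtain n where "t < real n" using reals_Archimedean2 by blast
  also have "\<dots> \<le> exp (c_exp n)" using c_exp_ge[of n] c_exp_le_exp[of n] by (rule order_trans)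
  also have "\<dots> \<le> knot n" by (rule exp_c_exp_le_knot)
  finally show ?thesis by blast
qed

lemma block_le_iff: "block s \<le> m \<longleftrightarrow> s \<le> knot m"
proof
  obtain k where "s \<le> knot k" using ex_less_knot[of s] by (auto intro: less_imp_le)
  then have "s \<le> knot (block s)" unfolding block_def by (rule LeastI)
  then show "block s \<le> m \<Longrightarrow> s \<le> knot m" using knot_mono[of "block s" m] by linarith
qed (simp add: block_def Least_le)

lemma le_knot_block: "s \<le> knot (block s)"
  using block_le_iff[of s "block s"] by simp

lemma rblock_le_iff: "rblock s \<le> m \<longleftrightarrow> s < knot m"
proof
  obtain k where "s < knot k" using ex_less_knot[of s] by blast
  then have "s < knot (rblock s)" unfolding rblock_def by (rule LeastI)
  then show "rblock s \<le> m \<Longrightarrow> s < knot m" using knot_mono[of "rblock s" m] by linarith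
qed (simp add: rblock_def Least_le)

lemma x0_pos: "0 < x0 s"
  by (simp add: x0_def)

lemma x0_star_pos: "0 < x0_star s"
  by (simp add: x0_star_def)

lemma x0_le_1: "x0 s \<le> 1"
  using c_exp_ge_4[of "block s"] by (simp add: x0_def)

lemma x0_star_le_1: "x0_star s \<le> 1"
  using c_exp_ge_4[of "rblock s"] by (simp add: x0_star_def)

lemma x0_measurable: "x0 \<in> borel_measurable borel"
proof (rule borel_measurable_antimono)
  have "block s \<le> block s'" if "s \<le> s'" for s s'
    using that block_le_iff[of s "block s'"] block_le_iff[of s' "block s'"] by simp
  then show "antimono x0" by (intro antimonoI) (simp add: x0_def)
qed

lemma x0_star_measurable: "x0_star \<in> borel_measurable borel"
proof (rule borel_measurable_antimono)
  have "rblock s \<le> rblock s'" if "s \<le> s'" for s s'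
    using that rblock_le_iff[of s "rblock s'"] rblock_le_iff[of s' "rblock s'"] by simp
  then show "antimono x0_star" by (intro antimonoI) (simp add: x0_star_def)
qed

lemma distrib_fun_x0_le:
  assumes "exp (- c_exp (Suc m)) \<le> l"
  shows "distrib_fun x0 l \<le> ennreal (knot m)"
proof -
  have "{s \<in> {0<..}. \<bar>x0 s\<bar> > l} \<subseteq> {0<..knot m}"
  proof
    fix s assume "s \<in> {s \<in> {0<..}. \<bar>x0 s\<bar> > l}"
    then have "0 < s" "exp (- c_exp (Suc m)) < x0 s" using assms x0_pos[of s] by auto
    then show "s \<in> {0<..knot m}" by (simp add: x0_def block_le_iff[symmetric] less_Suc_eq_le)
  qed
  then have "distrib_fun x0 l \<le> emeasure lborel {0<..knot m}"
    unfolding distrib_fun_def by (intro emeasure_mono) auto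
  then show ?thesis using knot_pos[of m] by simp
qed

lemma distrib_fun_x0_ge:
  assumes "l < exp (- c_exp m)"
  shows "ennreal (knot m) \<le> distrib_fun x0 l"
proof -
  have "{0<..knot m} \<subseteq> {s \<in> {0<..}. \<bar>x0 s\<bar> > l}"
  proof
    fix s assume s: "s \<in> {0<..knot m}"
    then have "exp (- c_exp m) \<le> x0 s" using block_le_iff[of s m] by (simp add: x0_def)
    then show "s \<in> {s \<in> {0<..}. \<bar>x0 s\<bar> > l}" using s assms x0_pos[of s] by auto
  qed
  moreover have "{s \<in> {0<..}. \<bar>x0 s\<bar> > l} \<in> sets lborel"
    using x0_measurable by measurable
  ultimately have "emeasure lborel {0<..knot m} \<le> distrib_fun x0 l"
    unfolding distrib_fun_def by (rule emeasure_mono)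
  then show ?thesis using knot_pos[of m] by simp
qed

lemma distrib_fun_x0_le_iff:
  assumes "0 \<le> l" "0 \<le> t"
  shows "distrib_fun x0 l \<le> ennreal t \<longleftrightarrow> x0_star t \<le> l"
proof
  assume le: "distrib_fun x0 l \<le> ennreal t"
  show "x0_star t \<le> l"
  proof (rule ccontr)
    assume "\<not> x0_star t \<le> l"
    then have "ennreal (knot (rblock t)) \<le> ennreal t"
      using distrib_fun_x0_ge[of l "rblock t"] le by (simp add: x0_star_def)
    then show False using rblock_le_iff[of t "rblock t"] assms by (simp add: ennreal_le_iff)
  qed
next
  assume le: "x0_star t \<le> l"
  show "distrib_fun x0 l \<le> ennreal t"
  proof (cases "rblock t")
    case 0
    have "exp (- c_exp 0) \<le> l" using le 0 by (simp add: x0_star_def)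
    then have "x0 s \<le> l" for s
      using order_trans[of "x0 s" "exp (- c_exp 0)" l] by (simp add: x0_def)
    then have "\<bar>x0 s\<bar> \<le> l" for s using x0_pos[of s] by simp
    then have "{s \<in> {0<..}. \<bar>x0 s\<bar> > l} = {}" by (auto simp: not_less)
    then show ?thesis unfolding distrib_fun_def by (simp only:) simp
  next
    case (Suc m)
    then have "distrib_fun x0 l \<le> ennreal (knot m)"
      using le by (intro distrib_fun_x0_le) (simp add: x0_star_def)
    also have "\<dots> \<le> ennreal t" using rblock_le_iff[of t m] Suc by (intro ennreal_leI) simp
    finally show ?thesis .
  qed
qed

lemma rearr_x0:
  assumes "0 \<le> t"
  shows "rearr x0 t = x0_star t"
proof -
  have "0 \<le> l \<and> distrib_fun x0 l \<le> ennreal t \<longleftrightarrow> x0_star t \<le> l" for l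
  proof (cases "0 \<le> l")
    case True
    then show ?thesis using distrib_fun_x0_le_iff[OF True assms] by simp
  next
    case False
    then show ?thesis using x0_star_pos[of t] by simp
  qed
  then have "{l. 0 \<le> l \<and> distrib_fun x0 l \<le> ennreal t} = {x0_star t..}" by auto
  then show ?thesis by (simp add: rearr_def)
qed

definition x0_star_int :: "real \<Rightarrow> real" where
  "x0_star_int t = (LINT s:{0<..t}|lborel. x0_star s)"

lemma set_integrable_x0_star: "set_integrable lborel {u<..v} x0_star"
proof -
  have "emeasure lborel {u<..v} < \<infinity>" by (cases "u \<le> v") (simp_all add: emeasure_lborel_Ioc)
  then have "integrable lborel (indicator {u<..v} :: real \<Rightarrow> real)" by (simp add: integrable_indicator_iff)
  moreover have "(\<lambda>s. indicator {u<..v} s *\<^sub>R x0_star s) \<in> borel_measurable lborel"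
    using x0_star_measurable by measurable
  moreover have "AE s in lborel. norm (indicator {u<..v} s *\<^sub>R x0_star s) \<le> norm (indicator {u<..v} s :: real)"
    using x0_star_pos x0_star_le_1 by (intro AE_I2) (simp add: indicator_def less_imp_le)
  ultimately show ?thesis unfolding set_integrable_def by (rule Bochner_Integration.integrable_bound)
qed

lemma x0_star_integral_nonneg: "0 \<le> (LINT s:A|lborel. x0_star s)"
  unfolding set_lebesgue_integral_def using x0_star_pos
  by (intro integral_nonneg_AE AE_I2) (simp add: indicator_def less_imp_le)

lemma x0_star_integral_le:
  assumes "u \<le> v" "\<And>s. s \<in> {u<..v} \<Longrightarrow> x0_star s \<le> c"
  shows "(LINT s:{u<..v}|lborel. x0_star s) \<le> c * (v - u)"
proof -
  have "(LINT s:{u<..v}|lborel. x0_star s) \<le> (LINT s:{u<..v}|lborel. c)"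
    using assms set_integrable_x0_star by (intro set_integral_mono) (auto simp: set_integrable_def)
  with assms(1) show ?thesis by (subst (asm) set_integral_const) (auto simp: mult.commute)
qed

lemma x0_star_integral_ge:
  assumes "u \<le> v" "\<And>s. s \<in> {u<..<v} \<Longrightarrow> c \<le> x0_star s"
  shows "c * (v - u) \<le> (LINT s:{u<..v}|lborel. x0_star s)"
proof -
  have "(LINT s:{u<..v}|lborel. c) \<le> (LINT s:{u<..v}|lborel. x0_star s)"
  proof (rule set_integral_mono_AE)
    show "AE s\<in>{u<..v} in lborel. c \<le> x0_star s"
      using AE_lborel_singleton[of v] by (rule eventually_mono) (use assms in auto)
  qed (use assms set_integrable_x0_star in \<open>auto simp: set_integrable_def\<close>)
  with assms(1) show ?thesis by (subst (asm) set_integral_const) (auto simp: mult.commute)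
qed

lemma x0_star_int_split:
  assumes "0 \<le> u" "u \<le> v"
  shows "x0_star_int v = x0_star_int u + (LINT s:{u<..v}|lborel. x0_star s)"
proof -
  have "{0<..v} = {0<..u} \<union> {u<..v}" using assms by auto
  then show ?thesis unfolding x0_star_int_def by (simp add: set_integral_Un set_integrable_x0_star)
qed

lemma mono_x0_star_int: "mono x0_star_int"
proof
  fix u v :: real assume "u \<le> v"
  show "x0_star_int u \<le> x0_star_int v"
  proof (cases "0 \<le> u")
    case True
    then show ?thesis using x0_star_int_split[OF True \<open>u \<le> v\<close>] x0_star_integral_nonneg by simp
  next
    case False
    then have "x0_star_int u = 0" by (simp add: x0_star_int_def set_lebesgue_integral_def)
    then show ?thesis using x0_star_integral_nonneg by (simp add: x0_star_int_def)
  qed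
qed

lemma x0_star_le: "knot j \<le> s \<Longrightarrow> x0_star s \<le> exp (- c_exp (Suc j))"
  using rblock_le_iff[of s j] by (simp add: x0_star_def Suc_le_eq)

lemma x0_star_ge: "s < knot m \<Longrightarrow> exp (- c_exp m) \<le> x0_star s"
  using rblock_le_iff[of s m] by (simp add: x0_star_def)

lemma exp_c_exp_knot: "exp (- c_exp k) * knot k = c_exp k"
  by (simp add: knot_def exp_minus)

text \<open>On the \<open>k\<close>-th block \<open>x0_star\<close> contributes at most its value \<open>exp (- c_exp k)\<close> times
  \<open>knot k = c_exp k * exp (c_exp k)\<close>, so the partial integrals sum to at most
  \<open>c_exp 0 + \<dots> + c_exp m = 2 * c_exp m - 4\<close>.\<close>
lemma x0_star_int_knot_le: "x0_star_int (knot m) \<le> 2 * c_exp m - 4"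
proof (induction m)
  case 0
  have "x0_star_int (knot 0) = (LINT s:{0<..knot 0}|lborel. x0_star s)"
    using x0_star_int_split[of 0 "knot 0"] knot_pos[of 0] by (simp add: x0_star_int_def set_lebesgue_integral_def)
  also have "\<dots> \<le> exp (- c_exp 0) * knot 0"
    using x0_star_integral_le[of 0 "knot 0" "exp (- c_exp 0)"] knot_pos[of 0]
    by (simp add: x0_star_def)
  also have "\<dots> = c_exp 0" by (rule exp_c_exp_knot)
  finally show ?case by (simp add: c_exp_def)
next
  case (Suc m)
  have "x0_star_int (knot (Suc m)) = x0_star_int (knot m) + (LINT s:{knot m<..knot (Suc m)}|lborel. x0_star s)"
    using knot_pos[of m] knot_mono[of m "Suc m"] by (intro x0_star_int_split) auto
  also have "\<dots> \<le> (2 * c_exp m - 4) + exp (- c_exp (Suc m)) * knot (Suc m)"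
  proof -
    have "(LINT s:{knot m<..knot (Suc m)}|lborel. x0_star s) \<le> exp (- c_exp (Suc m)) * (knot (Suc m) - knot m)"
      using knot_mono[of m "Suc m"] x0_star_le[of m] by (intro x0_star_integral_le) auto
    also have "\<dots> \<le> exp (- c_exp (Suc m)) * knot (Suc m)"
      using knot_pos[of m] by (simp add: right_diff_distrib)
    finally show ?thesis using Suc.IH by linarith
  qed
  also have "\<dots> = 2 * c_exp (Suc m) - 4"
    using exp_c_exp_knot[of "Suc m"] c_exp_Suc[of m] by linarith
  finally show ?case .
qed

lemma x0_star_int_knot_block_le:
  assumes "exp 1 \<le> t"
  shows "x0_star_int (knot (block t)) \<le> 4 * ln t"
proof (cases "block t")
  case 0
  with ln_ge_1[OF assms] show ?thesis using x0_star_int_knot_le[of 0] by (simp add: c_exp_def)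
next
  case (Suc j)
  then have "exp (c_exp j) < t"
    using block_le_iff[of t j] exp_c_exp_le_knot[of j] by simp
  moreover have "0 < t" using exp_gt_zero[of "c_exp j"] \<open>exp (c_exp j) < t\<close> by linarith
  ultimately have "ln (exp (c_exp j)) < ln t" by (subst ln_less_cancel_iff) auto
  then have "c_exp j < ln t" by simp
  then show ?thesis using Suc x0_star_int_knot_le[of "block t"] by (simp add: c_exp_Suc)
qed

lemma x0_star_int_le_ln:
  assumes "exp 1 \<le> t"
  shows "x0_star_int t \<le> 4 * ln t"
proof -
  have "x0_star_int t \<le> x0_star_int (knot (block t))" using mono_x0_star_int le_knot_block by (rule monoD)
  with x0_star_int_knot_block_le[OF assms] show ?thesis by linarith
qed

lemma distrib_fun_x0_inverse_le:
  assumes "0 < t"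
  shows "distrib_fun x0 (1 / t) \<le> ennreal (knot (block t))"
proof (rule distrib_fun_x0_le)
  have "t \<le> exp (c_exp (Suc (block t)))" using le_knot_block knot_le_exp_c_exp_Suc by (rule order_trans)
  with assms show "exp (- c_exp (Suc (block t))) \<le> 1 / t"
    by (simp add: exp_minus field_simps)
qed

lemma interval_integral_rearr_x0:
  assumes "0 \<le> t"
  shows "(LBINT s=0..t. rearr x0 s) = x0_star_int t"
proof -
  have "(LBINT s=0..t. rearr x0 s) = (LINT s:{0<..t}|lborel. rearr x0 s)"
    using assms by (simp add: interval_integral_Ioc zero_ereal_def)
  also have "\<dots> = x0_star_int t"
    unfolding x0_star_int_def by (rule set_lebesgue_integral_cong) (auto simp: rearr_x0)
  finally show ?thesis .
qed

lemma dix_fun_x0: "dix_fun x0 t = (if exp 1 \<le> t then x0_star_int t / ln t else 0)"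
proof (cases "exp 1 \<le> t")
  case True
  then have "0 \<le> t" using exp_gt_zero[of 1] by linarith
  with True show ?thesis by (simp add: dix_fun_def interval_integral_rearr_x0)
qed (simp add: dix_fun_def)

lemma stieltjes_fun_x0:
  "stieltjes_fun x0 t = (if exp 1 \<le> t then x0_star_int (enn2real (distrib_fun x0 (1 / t))) / ln t else 0)"
  by (simp add: stieltjes_fun_def interval_integral_rearr_x0)

lemma x0_star_int_distrib_fun_inverse_le:
  assumes "exp 1 \<le> t"
  shows "x0_star_int (enn2real (distrib_fun x0 (1 / t))) \<le> 4 * ln t"
proof -
  have "0 < t" using exp_gt_zero[of 1] assms by linarith
  then have "enn2real (distrib_fun x0 (1 / t)) \<le> enn2real (ennreal (knot (block t)))"
    by (intro enn2real_mono distrib_fun_x0_inverse_le) simp_all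
  then have "enn2real (distrib_fun x0 (1 / t)) \<le> knot (block t)"
    using knot_pos[of "block t"] by simp
  then have "x0_star_int (enn2real (distrib_fun x0 (1 / t))) \<le> x0_star_int (knot (block t))"
    by (rule monoD[OF mono_x0_star_int])
  with x0_star_int_knot_block_le[OF assms] show ?thesis by linarith
qed

lemma dix_fun_x0_Linf: "dix_fun x0 \<in> Linf"
proof (rule Linf_I)
  have [measurable]: "x0_star_int \<in> borel_measurable borel" using mono_x0_star_int by (rule borel_measurable_mono)
  show "dix_fun x0 \<in> borel_measurable borel" unfolding dix_fun_x0[abs_def] by measurable
  show "\<bar>dix_fun x0 t\<bar> \<le> 4" for t
    using x0_star_int_le_ln[of t] x0_star_integral_nonneg ln_ge_1[of t]
    by (auto simp: dix_fun_x0 x0_star_int_def divide_le_eq)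
qed

lemma stieltjes_fun_x0_Linf: "stieltjes_fun x0 \<in> Linf"
proof (rule Linf_I)
  define h where "h t = x0_star_int (enn2real (distrib_fun x0 (1 / max (exp 1) t)))" for t
  have "mono h"
  proof
    fix t t' :: real assume "t \<le> t'"
    let ?T = "max (exp 1) t" and ?T' = "max (exp 1) t'"
    have "0 < ?T" "?T \<le> ?T'" using \<open>t \<le> t'\<close> exp_gt_zero[of 1] by linarith+
    then have "distrib_fun x0 (1 / ?T) \<le> distrib_fun x0 (1 / ?T')"
      by (intro distrib_fun_antimono x0_measurable) (simp add: frac_le)
    moreover have "distrib_fun x0 (1 / ?T') \<le> ennreal (knot (block ?T'))"
      using \<open>0 < ?T\<close> \<open>?T \<le> ?T'\<close> by (intro distrib_fun_x0_inverse_le) linarith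
    then have "distrib_fun x0 (1 / ?T') < \<infinity>" using le_less_trans[OF _ ennreal_less_top] by simp
    ultimately show "h t \<le> h t'"
      unfolding h_def by (intro monoD[OF mono_x0_star_int] enn2real_mono) auto
  qed
  then have [measurable]: "h \<in> borel_measurable borel" by (rule borel_measurable_mono)
  have "stieltjes_fun x0 = (\<lambda>t. if exp 1 \<le> t then h t / ln t else 0)"
    by (auto simp: fun_eq_iff stieltjes_fun_x0 h_def max_absorb2)
  then show "stieltjes_fun x0 \<in> borel_measurable borel" by simp
  show "\<bar>stieltjes_fun x0 t\<bar> \<le> 4" for t
    using x0_star_int_distrib_fun_inverse_le[of t] x0_star_integral_nonneg ln_ge_1[of t]
    by (auto simp: stieltjes_fun_x0 x0_star_int_def divide_le_eq)
qed

lemma x0_M1inf: "x0 \<in> M1inf"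
proof -
  have "x0 \<in> bdd_meas"
    unfolding bdd_meas_def using x0_measurable x0_pos x0_le_1
    by (auto intro!: measurable_restrict_space1 exI[of _ 1] simp: less_imp_le)
  moreover have "(LBINT s=0..t. rearr x0 s) / ln t \<le> 4" if "exp 1 \<le> t" for t
  proof -
    have "0 \<le> t" using exp_gt_zero[of 1] that by linarith
    then show ?thesis using x0_star_int_le_ln[OF that] ln_ge_1[OF that]
      by (simp add: interval_integral_rearr_x0 divide_le_eq)
  qed
  ultimately show ?thesis unfolding M1inf_def by blast
qed

lemma distrib_fun_x0_window:
  assumes "exp (c_exp k) < t" "t \<le> knot k"
  shows "enn2real (distrib_fun x0 (1 / t)) = knot k"
proof -
  have "0 < t" using assms(1) exp_gt_zero[of "c_exp k"] by linarith
  have "exp (- c_exp (Suc k)) \<le> 1 / t"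
    using assms(2) knot_le_exp_c_exp_Suc[of k] \<open>0 < t\<close> by (simp add: exp_minus field_simps)
  then have "distrib_fun x0 (1 / t) \<le> ennreal (knot k)" by (rule distrib_fun_x0_le)
  moreover have "1 / t < exp (- c_exp k)"
    using assms(1) \<open>0 < t\<close> by (simp add: exp_minus field_simps)
  then have "ennreal (knot k) \<le> distrib_fun x0 (1 / t)" by (rule distrib_fun_x0_ge)
  ultimately show ?thesis using knot_pos[of k] by simp
qed

text \<open>On \<open>{exp (c_exp k)<..knot k / 2}\<close> the Stieltjes average already counts the whole block up to
  \<open>knot k\<close>, an extra integral of at least \<open>exp (- c_exp k) * knot k / 2 = c_exp k / 2\<close>,
  while \<open>ln t \<le> ln (knot k) \<le> 2 * c_exp k\<close>.\<close>
lemma dix_fun_x0_gap: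
  assumes t: "exp (c_exp k) < t" "t \<le> knot k / 2"
  shows "dix_fun x0 t + 1/4 \<le> stieltjes_fun x0 t"
proof -
  have "exp 1 \<le> exp (c_exp k)" using c_exp_ge_4[of k] by simp
  with t(1) have e1: "exp 1 \<le> t" by linarith
  have "0 < t" using t(1) exp_gt_zero[of "c_exp k"] by linarith
  have t_knot: "t \<le> knot k" using t(2) knot_pos[of k] by linarith
  have "c_exp k / 2 = exp (- c_exp k) * (knot k / 2)" using exp_c_exp_knot[of k] by simp
  also have "\<dots> \<le> exp (- c_exp k) * (knot k - t)" using t(2) by simp
  also have "\<dots> \<le> (LINT s:{t<..knot k}|lborel. x0_star s)"
    using t_knot x0_star_ge by (intro x0_star_integral_ge) auto
  also have "\<dots> = x0_star_int (knot k) - x0_star_int t"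
    using x0_star_int_split[of t "knot k"] \<open>0 < t\<close> t_knot by simp
  finally have gain: "c_exp k / 2 \<le> x0_star_int (knot k) - x0_star_int t" .
  have "ln t \<le> ln (knot k)" using \<open>0 < t\<close> t_knot by simp
  also have "\<dots> = ln (c_exp k) + c_exp k" using c_exp_ge_4[of k] by (simp add: knot_def ln_mult)
  also have "\<dots> \<le> 2 * c_exp k" using ln_le_minus_one[of "c_exp k"] c_exp_ge_4[of k] by simp
  finally have "1/4 \<le> (c_exp k / 2) / ln t"
    using ln_ge_1[OF e1] by (simp add: field_simps)
  also have "\<dots> \<le> (x0_star_int (knot k) - x0_star_int t) / ln t"
    using gain ln_ge_1[OF e1] by (intro divide_right_mono) auto
  also have "\<dots> = stieltjes_fun x0 t - dix_fun x0 t"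
    using e1 distrib_fun_x0_window[OF t(1) t_knot]
    by (simp add: dix_fun_x0 stieltjes_fun_x0 diff_divide_distrib)
  finally show ?thesis by simp
qed

lemma exp_c_exp_less_half_knot: "exp (c_exp k) < knot k / 2"
  using c_exp_ge_4[of k] by (simp add: knot_def)

lemma filterlim_exp_c_exp: "filterlim (\<lambda>k. exp (c_exp k)) at_top sequentially"
proof (rule filterlim_at_top_mono[OF filterlim_real_sequentially always_eventually], rule allI)
  fix k show "real k \<le> exp (c_exp k)" using c_exp_ge[of k] c_exp_le_exp[of k] by linarith
qed

lemma filterlim_ln_window: "filterlim (\<lambda>k. ln (knot k / 2) - ln (exp (c_exp k))) at_top sequentially"
proof -
  have "ln (knot k / 2) - ln (exp (c_exp k)) = ln (2 * 2 ^ k)" for k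
    using c_exp_ge_4[of k] by (simp add: knot_def ln_div ln_mult c_exp_def)
  moreover have "filterlim (\<lambda>k::nat. ln (2 * 2 ^ k :: real)) at_top sequentially" by real_asymp
  ultimately show ?thesis by simp
qed

theorem theorem1p5:
  shows "\<exists>(x::real \<Rightarrow> real) (\<omega>::(real \<Rightarrow> real) \<Rightarrow> real).
     (\<forall>s>0. 0 \<le> x s) \<and> x \<in> M1inf
   \<and> generalised_limit \<omega> \<and> dilation_invariant \<omega>
   \<and> dix_fun x \<in> Linf \<and> stieltjes_fun x \<in> Linf
   \<and> dixmier_trace \<omega> x \<noteq> \<omega> (stieltjes_fun x)"
proof -
  obtain \<omega> where \<omega>: "generalised_limit \<omega>" "dilation_invariant \<omega>"
    and offset: "\<And>f g d. f \<in> Linf \<Longrightarrow> g \<in> Linf \<Longrightarrow>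
      (\<And>k. log_avg (exp (c_exp k)) (knot k / 2) f + d \<le> log_avg (exp (c_exp k)) (knot k / 2) g)
      \<Longrightarrow> \<omega> f + d \<le> \<omega> g"
    using ex_dilation_invariant_generalised_limit[OF exp_gt_zero exp_c_exp_less_half_knot
        filterlim_exp_c_exp filterlim_ln_window] by blast
  have "log_avg (exp (c_exp k)) (knot k / 2) (dix_fun x0) + 1/4
      \<le> log_avg (exp (c_exp k)) (knot k / 2) (stieltjes_fun x0)" for k
    by (rule log_avg_add_const_le[OF dix_fun_x0_Linf stieltjes_fun_x0_Linf exp_gt_zero
        exp_c_exp_less_half_knot dix_fun_x0_gap]) auto
  then have "dixmier_trace \<omega> x0 + 1/4 \<le> \<omega> (stieltjes_fun x0)"
    unfolding dixmier_trace_def by (intro offset dix_fun_x0_Linf stieltjes_fun_x0_Linf)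
  then have "dixmier_trace \<omega> x0 \<noteq> \<omega> (stieltjes_fun x0)" by linarith
  moreover have "\<forall>s>0. 0 \<le> x0 s" using x0_pos less_imp_le by blast
  ultimately show ?thesis
    using \<omega> x0_M1inf dix_fun_x0_Linf stieltjes_fun_x0_Linf by blast
qed

end
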